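(* The set $K$ defined in the context has empty interior in $\mathbb{R}^2$.
   Context: For $k\ge 0$ and $n\ge 1$ let $t_{k,n}:=\frac{1}{2^k n}$. Define the similarities of $\mathbb{R}^2$: $U(x,y)=\left(\frac{x}{2},\frac{y+1}{2}\right)$, $D_0(x,y)=\left(\frac{x}{2},\frac{y}{2}\right)$, and $D_{k,n}(x,y)=\left(\frac{x+t_{k,n}}{2},\frac{y}{2}\right)$ for $k\ge0,n\ge1$. $K$ is the unique non-empty compact set $K\subset\mathbb{R}^2$ satisfying $K=U(K)\cup D_0(K)\cup\bigcup_{k\ge0,n\ge1}D_{k,n}(K)$. *)

theory Defs
  imports "HOL-Analysis.Analysis"
begin

definition tkn :: "nat \<Rightarrow> nat \<Rightarrow> real" where
  "tkn k n = 1 / (2 ^ k * real n)"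

definition U_map :: "real \<times> real \<Rightarrow> real \<times> real" where
  "U_map p = (fst p / 2, (snd p + 1) / 2)"

definition D0_map :: "real \<times> real \<Rightarrow> real \<times> real" where
  "D0_map p = (fst p / 2, snd p / 2)"

definition Dkn_map :: "nat \<Rightarrow> nat \<Rightarrow> real \<times> real \<Rightarrow> real \<times> real" where
  "Dkn_map k n p = ((fst p + tkn k n) / 2, snd p / 2)"

definition IFS_op :: "(real \<times> real) set \<Rightarrow> (real \<times> real) set" where
  "IFS_op S = U_map ` S \<union> D0_map ` S \<union> (\<Union>k. \<Union>n\<in>{1..}. Dkn_map k n ` S)"

end

theory Submission
  imports Defs
begin

text \<open>
  \<open>K\<close> lies in \<open>\<real> \<times> [0,1]\<close>; \<open>U\<close> maps it into \<open>y \<ge> 1/2\<close> and every other map into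
  \<open>y \<le> 1/2\<close>, the latter differing only by a horizontal translation from the compact
  countable set \<open>T = {0} \<union> {1/m}\<close>. So near the top edge only \<open>U\<close> applies, and \<open>K\<close> is
  squeezed onto the axis \<open>x = 0\<close> there. Undoing the first \<open>N\<close> binary digits of \<open>y\<close> sends a
  point of \<open>K\<close> in a dyadic strip of height \<open>2^-N\<close> back into \<open>K\<close>, after scaling by \<open>2^N\<close>
  and a horizontal translation from the countable compact set \<open>S_N = {\<Sum>i<N. 2^i t_i | t_i \<in> T}\<close>.
  Applied near the top of the strip, this puts the scaled abscissa of every vertical segment of
  \<open>K\<close> spanning the strip into \<open>S_N\<close>, so a rectangle inside \<open>K\<close> would give an uncountable
  subset of a countable set.
\<close>

definition shift_down :: "real \<Rightarrow> real \<times> real \<Rightarrow> real \<times> real" where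
  "shift_down t p = ((fst p + t) / 2, snd p / 2)"

fun dyadic_sums :: "real set \<Rightarrow> nat \<Rightarrow> real set" where
  "dyadic_sums T 0 = {0}"
| "dyadic_sums T (Suc N) = (\<lambda>(s, t). s + 2 ^ N * t) ` (dyadic_sums T N \<times> T)"

lemma compact_dyadic_sums: "compact T \<Longrightarrow> compact (dyadic_sums T N)"
  by (induction N)
     (auto intro!: compact_continuous_image compact_Times continuous_intros simp: case_prod_unfold)

lemma countable_dyadic_sums: "countable T \<Longrightarrow> countable (dyadic_sums T N)"
  by (induction N) auto

lemma dyadic_sums_Suc_zero:
  "s \<in> dyadic_sums T N \<Longrightarrow> 0 \<in> T \<Longrightarrow> s \<in> dyadic_sums T (Suc N)"
  by (force simp: image_iff)

lemma compact_halving_invariant_subset_unit_interval: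
  fixes Y :: "real set"
  assumes "compact Y" and "Y \<subseteq> (\<lambda>y. (y + 1) / 2) ` Y \<union> (\<lambda>y. y / 2) ` Y"
  shows "Y \<subseteq> {0..1}"
proof (cases "Y = {}")
  case False
  obtain m where m: "m \<in> Y" "\<forall>y\<in>Y. m \<le> y"
    using compact_attains_inf[OF assms(1) False] by blast
  obtain M where M: "M \<in> Y" "\<forall>y\<in>Y. y \<le> M"
    using compact_attains_sup[OF assms(1) False] by blast
  have "0 \<le> m" using m assms(2) by fastforce
  moreover have "M \<le> 1" using M assms(2) by fastforce
  ultimately show ?thesis using m(2) M(2) by fastforce
qed simp

lemma dyadic_rectangle_in_ball:
  fixes z :: "real \<times> real"
  assumes "0 \<le> snd z" and "0 < r"
  obtains a b N j where "a < b"
    "{a<..<b} \<times> {real j / 2 ^ N <..< (real j + 1) / 2 ^ N} \<subseteq> ball z r"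
proof -
  obtain N where N: "(1 / 2) ^ N < r / 2"
    using real_arch_pow_inv[of "r / 2" "1 / 2"] assms(2) by auto
  define j where "j = nat \<lfloor>2 ^ N * snd z\<rfloor>"
  have "real j = of_int \<lfloor>2 ^ N * snd z\<rfloor>" unfolding j_def using assms(1) by simp
  then have "real j \<le> 2 ^ N * snd z" "2 ^ N * snd z < real j + 1" by linarith+
  then have j: "real j / 2 ^ N \<le> snd z" "snd z < (real j + 1) / 2 ^ N"
    by (simp_all add: field_simps)
  have "(x, y) \<in> ball z r"
    if x: "fst z - r/2 < x" "x < fst z + r/2" and y: "real j / 2 ^ N < y" "y < (real j + 1) / 2 ^ N"
    for x y
  proof -
    have "(real j + 1) / 2 ^ N = real j / 2 ^ N + (1 / 2) ^ N"
      by (simp add: field_simps)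
    then have "\<bar>y - snd z\<bar> < r / 2" using j y N by linarith
    moreover have "\<bar>x - fst z\<bar> < r / 2" using x by linarith
    moreover have "dist z (x, y) = sqrt ((x - fst z)\<^sup>2 + (y - snd z)\<^sup>2)"
      by (cases z) (simp add: dist_Pair_Pair dist_real_def power2_commute)
    ultimately show ?thesis
      using sqrt_sum_squares_le_sum_abs[of "x - fst z" "y - snd z"] by simp
  qed
  then have "{fst z - r/2<..<fst z + r/2} \<times> {real j / 2 ^ N <..< (real j + 1) / 2 ^ N} \<subseteq> ball z r"
    by auto
  then show thesis using assms(2) by (intro that) simp_all
qed

locale up_down_system =
  fixes K :: "(real \<times> real) set" and T :: "real set"
  assumes compact_K: "compact K"
    and compact_T: "compact T" and countable_T: "countable T" and zero_in_T: "0 \<in> T"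
    and covered: "K \<subseteq> U_map ` K \<union> (\<Union>t\<in>T. shift_down t ` K)"
begin

lemma K_cases:
  assumes "p \<in> K"
  obtains (up) q where "q \<in> K" "p = U_map q"
    | (down) q t where "q \<in> K" "t \<in> T" "p = shift_down t q"
  using covered assms by blast

lemma snd_in_unit_interval: "p \<in> K \<Longrightarrow> snd p \<in> {0..1}"
proof -
  have "snd ` K \<subseteq> (\<lambda>y. (y + 1) / 2) ` snd ` K \<union> (\<lambda>y. y / 2) ` snd ` K"
  proof
    fix y assume "y \<in> snd ` K"
    then obtain p where "p \<in> K" "y = snd p" by blast
    then show "y \<in> (\<lambda>y. (y + 1) / 2) ` snd ` K \<union> (\<lambda>y. y / 2) ` snd ` K"
      by (cases rule: K_cases) (auto simp: U_map_def shift_down_def)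
  qed
  moreover have "compact (snd ` K)"
    using compact_K by (intro compact_continuous_image continuous_intros)
  ultimately show "p \<in> K \<Longrightarrow> snd p \<in> {0..1}"
    using compact_halving_invariant_subset_unit_interval by blast
qed

lemma snd_U_map_ge: "q \<in> K \<Longrightarrow> 1 / 2 \<le> snd (U_map q)"
  using snd_in_unit_interval[of q] by (simp add: U_map_def)

lemma snd_shift_down_le: "q \<in> K \<Longrightarrow> snd (shift_down t q) \<le> 1 / 2"
  using snd_in_unit_interval[of q] by (simp add: shift_down_def)

lemma fst_bounded: obtains B where "0 < B" "\<forall>q\<in>K. \<bar>fst q\<bar> \<le> B"
proof -
  obtain B where "0 < B" "\<forall>q\<in>K. norm q \<le> B"
    using compact_imp_bounded[OF compact_K] bounded_pos by blast
  moreover have "\<bar>fst q\<bar> \<le> norm q" for q :: "real \<times> real"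
    using norm_fst_le[of "fst q" "snd q"] by simp
  ultimately have "\<forall>q\<in>K. \<bar>fst q\<bar> \<le> B" by (meson order_trans)
  with \<open>0 < B\<close> show thesis by (rule that)
qed

lemma fst_small_near_top:
  assumes "\<forall>q\<in>K. \<bar>fst q\<bar> \<le> B"
  shows "p \<in> K \<Longrightarrow> 1 - 1 / 2 ^ m < snd p \<Longrightarrow> \<bar>fst p\<bar> \<le> B / 2 ^ m"
proof (induction m arbitrary: p)
  case 0
  then show ?case using assms by simp
next
  case (Suc m)
  have "(1::real) / 2 ^ Suc m \<le> 1 / 2" by (simp add: field_simps)
  with Suc.prems(2) have upper: "1 / 2 < snd p" by linarith
  from Suc.prems(1) show ?case
  proof (cases rule: K_cases)
    case (up q)
    then have "1 - 1 / 2 ^ m < snd q" using Suc.prems(2) by (auto simp: U_map_def field_simps)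
    then show ?thesis using Suc.IH up by (fastforce simp: U_map_def field_simps)
  next
    case (down q t)
    then show ?thesis using snd_shift_down_le[OF down(1), of t] upper by simp
  qed
qed

text \<open>
  A point in the \<open>j\<close>-th dyadic strip of height \<open>2^-N\<close> is the image of a point of \<open>K\<close> under
  \<open>N\<close> maps whose \<open>U\<close>/\<open>shift_down\<close> pattern spells the binary digits of \<open>j\<close>.
\<close>
lemma dyadic_strip_rescale:
  "p \<in> K \<Longrightarrow> real j / 2 ^ N < snd p \<Longrightarrow> snd p < (real j + 1) / 2 ^ N \<Longrightarrow>
    \<exists>s\<in>dyadic_sums T N. (2 ^ N * fst p - s, 2 ^ N * snd p - real j) \<in> K"
proof (induction N arbitrary: p j)
  case 0
  then have "j = 0" using snd_in_unit_interval[of p] by simp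
  then show ?case using "0.prems"(1) by simp
next
  case (Suc N)
  from Suc.prems(1) show ?case
  proof (cases rule: K_cases)
    case (up q)
    have "\<not> j < 2 ^ N"
    proof
      assume "j < 2 ^ N"
      then have "real j + 1 \<le> 2 ^ N"
        by (metis Suc_leI add.commute of_nat_Suc of_nat_le_iff of_nat_numeral of_nat_power)
      then have "(real j + 1) / 2 ^ Suc N \<le> 1 / 2" by (simp add: field_simps)
      moreover have "1 / 2 \<le> snd p" using snd_U_map_ge[OF up(1)] up(2) by simp
      ultimately show False using Suc.prems(3) by linarith
    qed
    then have j: "real (j - 2 ^ N) = real j - 2 ^ N" by (simp add: of_nat_diff)
    have "real (j - 2 ^ N) / 2 ^ N < snd q" "snd q < (real (j - 2 ^ N) + 1) / 2 ^ N"
      using Suc.prems(2,3) up(2) j by (auto simp: U_map_def field_simps)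
    then obtain s where "s \<in> dyadic_sums T N"
        "(2 ^ N * fst q - s, 2 ^ N * snd q - real (j - 2 ^ N)) \<in> K"
      using Suc.IH up(1) by blast
    moreover have "(2 ^ Suc N * fst p - s, 2 ^ Suc N * snd p - real j)
        = (2 ^ N * fst q - s, 2 ^ N * snd q - real (j - 2 ^ N))"
      using up(2) j by (auto simp: U_map_def field_simps)
    ultimately show ?thesis using dyadic_sums_Suc_zero zero_in_T by metis
  next
    case (down q t)
    have "real j / 2 ^ N < snd q" "snd q < (real j + 1) / 2 ^ N"
      using Suc.prems(2,3) down(3) by (auto simp: shift_down_def field_simps)
    then obtain s where "s \<in> dyadic_sums T N" "(2 ^ N * fst q - s, 2 ^ N * snd q - real j) \<in> K"
      using Suc.IH down(1) by blast
    moreover have "(2 ^ Suc N * fst p - (s + 2 ^ N * t), 2 ^ Suc N * snd p - real j)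
        = (2 ^ N * fst q - s, 2 ^ N * snd q - real j)"
      using down(3) by (auto simp: shift_down_def field_simps)
    moreover have "s + 2 ^ N * t \<in> dyadic_sums T (Suc N)"
      using \<open>s \<in> dyadic_sums T N\<close> down(2) by force
    ultimately show ?thesis by metis
  qed
qed

lemma vertical_segment_scaled_in_dyadic_sums:
  assumes segment: "\<And>y. real j / 2 ^ N < y \<Longrightarrow> y < (real j + 1) / 2 ^ N \<Longrightarrow> (x, y) \<in> K"
  shows "2 ^ N * x \<in> dyadic_sums T N"
proof -
  obtain B where B: "0 < B" "\<forall>q\<in>K. \<bar>fst q\<bar> \<le> B" using fst_bounded by blast
  have "2 ^ N * x \<in> closure (dyadic_sums T N)"
    unfolding closure_approachable
  proof (intro allI impI)
    fix e :: real assume "0 < e"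
    then obtain L where L: "(1 / 2) ^ L < e / B"
      using real_arch_pow_inv[of "e / B" "1 / 2"] B(1) by auto
    define y where "y = (real j + 1 - 1 / 2 ^ Suc L) / 2 ^ N"
    have "(1::real) / 2 ^ Suc L < 1" using one_less_power[of "2::real" "Suc L"] by simp
    then have "real j / 2 ^ N < y" "y < (real j + 1) / 2 ^ N"
      unfolding y_def by (simp_all add: divide_strict_right_mono)
    then obtain s where s: "s \<in> dyadic_sums T N" "(2 ^ N * x - s, 2 ^ N * y - real j) \<in> K"
      using dyadic_strip_rescale[of "(x, y)" j N] segment by auto
    have "1 - 1 / 2 ^ L < 2 ^ N * y - real j" unfolding y_def by (simp add: field_simps)
    then have "\<bar>2 ^ N * x - s\<bar> \<le> B / 2 ^ L" using fst_small_near_top[OF B(2)] s(2) by fastforce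
    also have "\<dots> < e" using L B(1) by (simp add: field_simps)
    finally show "\<exists>s\<in>dyadic_sums T N. dist s (2 ^ N * x) < e"
      using s(1) by (auto simp: dist_real_def abs_minus_commute)
  qed
  then show ?thesis using compact_dyadic_sums[OF compact_T] by (simp add: compact_imp_closed)
qed

lemma no_dyadic_rectangle:
  assumes "a < b" and "{a<..<b} \<times> {real j / 2 ^ N <..< (real j + 1) / 2 ^ N} \<subseteq> K"
  shows False
proof -
  have "{a<..<b} \<subseteq> (\<lambda>s. s / 2 ^ N) ` dyadic_sums T N"
  proof
    fix x assume "x \<in> {a<..<b}"
    then have "2 ^ N * x \<in> dyadic_sums T N"
      using assms(2) by (intro vertical_segment_scaled_in_dyadic_sums) auto
    then show "x \<in> (\<lambda>s. s / 2 ^ N) ` dyadic_sums T N" by force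
  qed
  then have "countable {a<..<b}"
    by (rule countable_subset[OF _ countable_image[OF countable_dyadic_sums[OF countable_T]]])
  then show False using uncountable_open_interval assms(1) by blast
qed

lemma interior_empty: "interior K = {}"
proof (rule ccontr)
  assume "interior K \<noteq> {}"
  then obtain z r where "0 < r" and ball: "ball z r \<subseteq> K" by (meson ex_in_conv mem_interior)
  then have "z \<in> K" by auto
  then have "0 \<le> snd z" using snd_in_unit_interval by simp
  then obtain a b N j where "a < b"
    and "{a<..<b} \<times> {real j / 2 ^ N <..< (real j + 1) / 2 ^ N} \<subseteq> ball z r"
    using \<open>0 < r\<close> by (rule dyadic_rectangle_in_ball)
  with ball show False using no_dyadic_rectangle[of a b j N] by blast
qed

end

definition reciprocals :: "real set" where
  "reciprocals = insert 0 (range (\<lambda>m. inverse (real (Suc m))))"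

lemma tkn_in_reciprocals: "1 \<le> n \<Longrightarrow> tkn k n \<in> reciprocals"
proof -
  assume "1 \<le> n"
  then have "real (Suc (2 ^ k * n - 1)) = 2 ^ k * real n" by simp
  then show ?thesis unfolding tkn_def reciprocals_def by (metis inverse_eq_divide rangeI insertI2)
qed

lemma IFS_op_subset: "IFS_op S \<subseteq> U_map ` S \<union> (\<Union>t\<in>reciprocals. shift_down t ` S)"
proof -
  have "D0_map = shift_down 0" "\<And>k n. Dkn_map k n = shift_down (tkn k n)"
    by (auto simp: D0_map_def Dkn_map_def shift_down_def)
  moreover have "0 \<in> reciprocals" by (simp add: reciprocals_def)
  ultimately show ?thesis unfolding IFS_op_def using tkn_in_reciprocals by fastforce
qed

theorem proposition2p3:
  fixes K :: "(real \<times> real) set"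
  assumes "K \<noteq> {}" and "compact K" and "K = IFS_op K"
  shows "interior K = {}"
proof -
  have "up_down_system K reciprocals"
  proof
    show "compact reciprocals"
      unfolding reciprocals_def by (rule compact_sequence_with_limit[OF LIMSEQ_inverse_real_of_nat])
    show "countable reciprocals" "0 \<in> reciprocals" by (simp_all add: reciprocals_def)
    show "K \<subseteq> U_map ` K \<union> (\<Union>t\<in>reciprocals. shift_down t ` K)"
      using assms(3) IFS_op_subset by blast
  qed (fact assms(2))
  then show ?thesis by (rule up_down_system.interior_empty)
qed

end
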